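(* For every fixed integer $k \ge 1$, \[ \sum_{n \ge 0} w(n,k) q^n = \frac{q^{k+4}}{(1-q)^2(1-q^2)^{k+1}}, \] where $w(n,k)$ is the number of compositions of $n$ with all parts in $\{1,2\}$ having exactly $k$ water cells.
   Context: A composition of $n \ge 0$ is a finite sequence $(c_1,\dots,c_t)$ of positive integers with $c_1+\cdots+c_t=n$; the empty composition is the unique composition of $0$. Let $C_{12}(n)$ be the set of compositions of $n$ all of whose parts lie in $\{1,2\}$. The number of water cells of a composition $(c_1,\dots,c_t)$ is $\sum_{i=1}^{t} \max\bigl(0, \min(\max_{j \le i} c_j, \max_{j \ge i} c_j) - c_i\bigr)$ (the number of unit squares that would hold water poured over its bargraph, in which column $i$ has height $c_i$). For $n,k \ge 0$, $W(n,k)$ is the set of compositions in $C_{12}(n)$ with exactly $k$ water cells and $w(n,k)=|W(n,k)|$. *)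

theory Defs
  imports "HOL-Computational_Algebra.Formal_Power_Series"
begin

definition C12 :: "nat \<Rightarrow> nat list set" where
  "C12 n = {cs. set cs \<subseteq> {1, 2} \<and> sum_list cs = n}"

definition water_cells :: "nat list \<Rightarrow> nat" where
  "water_cells cs = (\<Sum>i<length cs.
      nat (max 0 (int (min (Max (set (take (Suc i) cs))) (Max (set (drop i cs)))) - int (cs ! i))))"

definition W :: "nat \<Rightarrow> nat \<Rightarrow> nat list set" where
  "W n k = {cs \<in> C12 n. water_cells cs = k}"

definition w :: "nat \<Rightarrow> nat \<Rightarrow> nat" where
  "w n k = card (W n k)"

end

theory Submission
  imports Defs
begin

text \<open>With parts in \<open>{1, 2}\<close>, the water cells are the parts 1 having a part 2 somewhere on
  each side; reading left to right, one only has to remember whether a 2 has been seen. Splitting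
  off the first part of a composition then gives linear equations between generating functions:
  for the compositions \<open>A\<close> with \<open>k\<close> water cells, \<open>A = q A + q\<^sup>2 T\<^sub>k\<close>, where \<open>T\<^sub>j\<close> counts
  those that, placed after a 2, contain another 2 and trap \<open>j\<close> ones; and
  \<open>T\<^sub>j\<^sub>+\<^sub>1 = q T\<^sub>j + q\<^sup>2 T\<^sub>j\<^sub>+\<^sub>1\<close>, \<open>T\<^sub>0 = q\<^sup>2 / ((1 - q) (1 - q\<^sup>2))\<close>.\<close>

fun trapped_ones :: "bool \<Rightarrow> nat list \<Rightarrow> nat" where
  "trapped_ones seen [] = 0"
| "trapped_ones seen (c # cs) =
     (if c = 1 \<and> seen \<and> 2 \<in> set cs then 1 else 0) + trapped_ones (seen \<or> c = 2) cs"

lemma trapped_ones_no_two: "2 \<notin> set cs \<Longrightarrow> trapped_ones seen cs = 0"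
  by (induction cs arbitrary: seen) auto

lemma Max_one_two:
  assumes "S \<subseteq> {1, 2::nat}" and "S \<noteq> {}"
  shows "Max S = (if 2 \<in> S then 2 else 1)"
proof -
  have "S = {1} \<or> S = {2} \<or> S = {1, 2}"
    using assms by auto
  then show ?thesis by auto
qed

lemma water_cell_one_two:
  assumes "set cs \<subseteq> {1, 2}" and "i < length cs"
  shows "nat (max 0 (int (min (Max (set (take (Suc i) cs))) (Max (set (drop i cs)))) - int (cs ! i)))
       = (if cs ! i = 1 \<and> 2 \<in> set (take i cs) \<and> 2 \<in> set (drop (Suc i) cs) then 1 else 0)"
proof -
  have take: "take (Suc i) cs = take i cs @ [cs ! i]"
    using assms(2) by (simp add: take_Suc_conv_app_nth)
  have drop: "drop i cs = cs ! i # drop (Suc i) cs"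
    using assms(2) by (simp add: Cons_nth_drop_Suc)
  have "set (take (Suc i) cs) \<subseteq> {1, 2}" "set (drop i cs) \<subseteq> {1, 2}"
    using assms(1) set_take_subset set_drop_subset by fastforce+
  then have "Max (set (take (Suc i) cs)) = (if 2 \<in> set (take i cs) \<or> cs ! i = 2 then 2 else 1)"
        and "Max (set (drop i cs)) = (if 2 \<in> set (drop (Suc i) cs) \<or> cs ! i = 2 then 2 else 1)"
    using Max_one_two[of "set (take (Suc i) cs)"] Max_one_two[of "set (drop i cs)"] unfolding take drop by auto
  moreover have "cs ! i = 1 \<or> cs ! i = 2"
    using assms nth_mem by fastforce
  ultimately show ?thesis by auto
qed

lemma sum_trapped_ones:
  "(\<Sum>i<length cs. if cs ! i = 1 \<and> (seen \<or> 2 \<in> set (take i cs)) \<and> 2 \<in> set (drop (Suc i) cs)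
                  then 1 else 0) = trapped_ones seen cs"
proof (induction cs arbitrary: seen)
  case (Cons c cs)
  have "(\<Sum>i<length cs. if (c # cs) ! Suc i = 1 \<and> (seen \<or> 2 \<in> set (take (Suc i) (c # cs)))
                            \<and> 2 \<in> set (drop (Suc (Suc i)) (c # cs)) then 1 else 0)
      = (\<Sum>i<length cs. if cs ! i = 1 \<and> ((seen \<or> c = 2) \<or> 2 \<in> set (take i cs))
                            \<and> 2 \<in> set (drop (Suc i) cs) then 1 else 0)"
    by (rule sum.cong) auto
  then show ?case
    using Cons.IH[of "seen \<or> c = 2"] unfolding length_Cons sum.lessThan_Suc_shift by simp
qed simp

lemma water_cells_eq_trapped_ones:
  "set cs \<subseteq> {1, 2} \<Longrightarrow> water_cells cs = trapped_ones False cs"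
  unfolding water_cells_def sum_trapped_ones[of cs False, symmetric]
  by (rule sum.cong) (simp_all add: water_cell_one_two)

lemma length_le_sum_list: "0 \<notin> set cs \<Longrightarrow> length cs \<le> sum_list (cs :: nat list)"
  by (induction cs) (auto simp: Suc_le_eq)

lemma finite_C12: "finite (C12 n)"
proof (rule finite_subset)
  show "C12 n \<subseteq> {cs. set cs \<subseteq> {1, 2} \<and> length cs \<le> n}"
    unfolding C12_def using length_le_sum_list by fastforce
  show "finite {cs. set cs \<subseteq> {1, 2::nat} \<and> length cs \<le> n}"
    by (rule finite_lists_length_le) simp
qed

lemma Nil_in_C12_iff: "[] \<in> C12 n \<longleftrightarrow> n = 0"
  by (auto simp: C12_def)

lemma Cons_in_C12_iff: "c # cs \<in> C12 n \<longleftrightarrow> (c = 1 \<or> c = 2) \<and> c \<le> n \<and> cs \<in> C12 (n - c)"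
  by (auto simp: C12_def)

lemma C12_decompose:
  "{cs \<in> C12 n. P cs} =
     (if n = 0 \<and> P [] then {[]} else {})
   \<union> Cons 1 ` {cs \<in> C12 (n - 1). 1 \<le> n \<and> P (1 # cs)}
   \<union> Cons 2 ` {cs \<in> C12 (n - 2). 2 \<le> n \<and> P (2 # cs)}"
proof (rule set_eqI)
  fix cs
  show "cs \<in> {cs \<in> C12 n. P cs} \<longleftrightarrow> cs \<in> (if n = 0 \<and> P [] then {[]} else {})
      \<union> Cons 1 ` {cs \<in> C12 (n - 1). 1 \<le> n \<and> P (1 # cs)}
      \<union> Cons 2 ` {cs \<in> C12 (n - 2). 2 \<le> n \<and> P (2 # cs)}"
    by (cases cs) (auto simp: Nil_in_C12_iff Cons_in_C12_iff)
qed

definition C12_gf :: "(nat list \<Rightarrow> bool) \<Rightarrow> 'a::semiring_1 fps" where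
  "C12_gf P = Abs_fps (\<lambda>n. of_nat (card {cs \<in> C12 n. P cs}))"

lemma C12_gf_unfold:
  "C12_gf P = (if P [] then 1 else 0)
     + fps_X * C12_gf (\<lambda>cs. P (1 # cs)) + fps_X ^ 2 * C12_gf (\<lambda>cs. P (2 # cs))"
proof (rule fps_ext)
  fix n :: nat
  let ?N = "if n = 0 \<and> P [] then {[]} else {} :: nat list set"
  let ?A = "{cs \<in> C12 (n - 1). 1 \<le> n \<and> P (1 # cs)}"
  let ?B = "{cs \<in> C12 (n - 2). 2 \<le> n \<and> P (2 # cs)}"
  have decompose: "{cs \<in> C12 n. P cs} = ?N \<union> Cons 1 ` ?A \<union> Cons 2 ` ?B"
    by (rule C12_decompose)
  have fin: "finite ?N" "finite (Cons 1 ` ?A)" "finite (Cons 2 ` ?B)"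
    using finite_C12 by simp_all
  have "card {cs \<in> C12 n. P cs} = card (?N \<union> Cons 1 ` ?A) + card (Cons 2 ` ?B)"
    unfolding decompose by (rule card_Un_disjoint) (use fin in auto)
  also have "card (?N \<union> Cons 1 ` ?A) = card ?N + card (Cons 1 ` ?A)"
    by (rule card_Un_disjoint) (use fin in auto)
  finally have card_eq: "card {cs \<in> C12 n. P cs} = card ?N + card ?A + card ?B"
    by (simp add: card_image)
  have "fps_nth (fps_X * C12_gf (\<lambda>cs. P (1 # cs)) :: 'a fps) n = of_nat (card ?A)"
    by (cases n) (simp_all add: C12_gf_def)
  moreover have "fps_nth (fps_X ^ 2 * C12_gf (\<lambda>cs. P (2 # cs)) :: 'a fps) n = of_nat (card ?B)"
    by (simp add: C12_gf_def fps_X_power_mult_nth not_less)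
  moreover have "fps_nth ((if P [] then 1 else 0) :: 'a fps) n = of_nat (card ?N)"
    by simp
  ultimately show "fps_nth (C12_gf P) n = fps_nth ((if P [] then 1 else 0)
     + fps_X * C12_gf (\<lambda>cs. P (1 # cs)) + fps_X ^ 2 * C12_gf (\<lambda>cs. P (2 # cs)) :: 'a fps) n"
    unfolding C12_gf_def fps_add_nth fps_nth_Abs_fps card_eq by simp
qed

lemma C12_gf_False: "C12_gf (\<lambda>_. False) = 0"
  by (simp add: C12_gf_def fps_zero_def)

lemma mult_one_minus_eqI:
  fixes F G H :: "'a::comm_ring_1"
  assumes "F = G + H * F"
  shows "F * (1 - H) = G"
proof -
  have "F * (1 - H) = F - H * F"
    by (simp add: algebra_simps)
  then show ?thesis
    using assms by (metis add_diff_cancel_right')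
qed

lemma C12_gf_no_two: "(C12_gf (\<lambda>cs. 2 \<notin> set cs) :: 'a::comm_ring_1 fps) * (1 - fps_X) = 1"
  using C12_gf_unfold[of "\<lambda>cs. 2 \<notin> set cs"] by (intro mult_one_minus_eqI) (simp add: C12_gf_False)

lemma C12_gf_trapped_True_0:
  "(C12_gf (\<lambda>cs. trapped_ones True cs = 0) :: 'a::comm_ring_1 fps) * (1 - fps_X) * (1 - fps_X ^ 2) = 1"
proof -
  let ?Z = "C12_gf (\<lambda>cs. trapped_ones True cs = 0) :: 'a fps"
  let ?O = "C12_gf (\<lambda>cs. 2 \<notin> set cs) :: 'a fps"
  have "(\<lambda>cs. trapped_ones True (1 # cs) = 0) = (\<lambda>cs. 2 \<notin> set cs)"
    by (auto simp: fun_eq_iff trapped_ones_no_two)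
  then have "?Z * (1 - fps_X ^ 2) = 1 + fps_X * ?O"
    using C12_gf_unfold[of "\<lambda>cs. trapped_ones True cs = 0"] by (intro mult_one_minus_eqI) simp
  then have "?Z * (1 - fps_X) * (1 - fps_X ^ 2) = (1 + fps_X * ?O) * (1 - fps_X)"
    by (simp add: mult_ac)
  also have "\<dots> = (1 - fps_X) + fps_X * (?O * (1 - fps_X))"
    by (simp add: algebra_simps)
  also have "\<dots> = 1"
    by (simp add: C12_gf_no_two)
  finally show ?thesis .
qed

lemma C12_gf_two_trapped_0:
  "(C12_gf (\<lambda>cs. 2 \<in> set cs \<and> trapped_ones True cs = 0) :: 'a::comm_ring_1 fps)
     = fps_X ^ 2 * C12_gf (\<lambda>cs. trapped_ones True cs = 0)"
proof -
  have "(\<lambda>cs. 2 \<in> set (1 # cs) \<and> trapped_ones True (1 # cs) = 0) = (\<lambda>_. False)"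
    by (auto simp: fun_eq_iff)
  then show ?thesis
    using C12_gf_unfold[of "\<lambda>cs. 2 \<in> set cs \<and> trapped_ones True cs = 0"] by (simp add: C12_gf_False)
qed

lemma C12_gf_two_trapped_Suc:
  "(C12_gf (\<lambda>cs. 2 \<in> set cs \<and> trapped_ones True cs = Suc j) :: 'a::comm_ring_1 fps) * (1 - fps_X ^ 2)
     = fps_X * C12_gf (\<lambda>cs. 2 \<in> set cs \<and> trapped_ones True cs = j)"
proof -
  have "(\<lambda>cs. 2 \<in> set (1 # cs) \<and> trapped_ones True (1 # cs) = Suc j)
      = (\<lambda>cs. 2 \<in> set cs \<and> trapped_ones True cs = j)"
    by (auto simp: fun_eq_iff)
  moreover have "(\<lambda>cs. 2 \<in> set (2 # cs) \<and> trapped_ones True (2 # cs) = Suc j)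
      = (\<lambda>cs. 2 \<in> set cs \<and> trapped_ones True cs = Suc j)"
    using trapped_ones_no_two by (fastforce simp: fun_eq_iff)
  ultimately show ?thesis
    using C12_gf_unfold[of "\<lambda>cs. 2 \<in> set cs \<and> trapped_ones True cs = Suc j"]
    by (intro mult_one_minus_eqI) simp
qed

lemma C12_gf_two_trapped:
  "(C12_gf (\<lambda>cs. 2 \<in> set cs \<and> trapped_ones True cs = j) :: 'a::comm_ring_1 fps)
     * (1 - fps_X) * (1 - fps_X ^ 2) ^ (j + 1) = fps_X ^ (j + 2)"
proof (induction j)
  case 0
  have "(C12_gf (\<lambda>cs. 2 \<in> set cs \<and> trapped_ones True cs = 0) :: 'a fps) * (1 - fps_X) * (1 - fps_X ^ 2)
      = fps_X ^ 2 * (C12_gf (\<lambda>cs. trapped_ones True cs = 0) * (1 - fps_X) * (1 - fps_X ^ 2))"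
    by (simp add: C12_gf_two_trapped_0 mult_ac)
  also have "\<dots> = fps_X ^ 2"
    by (simp only: C12_gf_trapped_True_0 mult_1_right)
  finally show ?case
    by (simp only: add_0 power_one_right)
next
  case (Suc j)
  let ?T = "\<lambda>j. C12_gf (\<lambda>cs. 2 \<in> set cs \<and> trapped_ones True cs = j) :: 'a fps"
  have "?T (Suc j) * (1 - fps_X) * (1 - fps_X ^ 2) ^ (Suc j + 1)
      = (?T (Suc j) * (1 - fps_X ^ 2)) * ((1 - fps_X) * (1 - fps_X ^ 2) ^ (j + 1))"
    by (simp add: mult_ac)
  also have "\<dots> = fps_X * (?T j * (1 - fps_X) * (1 - fps_X ^ 2) ^ (j + 1))"
    by (simp only: C12_gf_two_trapped_Suc mult.assoc)
  also have "\<dots> = fps_X ^ (Suc j + 2)"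
    by (simp only: Suc.IH power_Suc add_Suc)
  finally show ?case .
qed

lemma C12_gf_trapped_False:
  assumes "k \<ge> 1"
  shows "(C12_gf (\<lambda>cs. trapped_ones False cs = k) :: 'a::comm_ring_1 fps)
     * ((1 - fps_X) ^ 2 * (1 - fps_X ^ 2) ^ (k + 1)) = fps_X ^ (k + 4)"
proof -
  let ?A = "C12_gf (\<lambda>cs. trapped_ones False cs = k) :: 'a fps"
  let ?T = "C12_gf (\<lambda>cs. 2 \<in> set cs \<and> trapped_ones True cs = k) :: 'a fps"
  have "(\<lambda>cs. trapped_ones True cs = k) = (\<lambda>cs. 2 \<in> set cs \<and> trapped_ones True cs = k)"
    using assms trapped_ones_no_two by (fastforce simp: fun_eq_iff)
  then have A_eq: "?A * (1 - fps_X) = fps_X ^ 2 * ?T"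
    using assms C12_gf_unfold[of "\<lambda>cs. trapped_ones False cs = k"]
    by (intro mult_one_minus_eqI) (simp add: add.commute)
  have "?A * ((1 - fps_X) ^ 2 * (1 - fps_X ^ 2) ^ (k + 1))
      = (?A * (1 - fps_X)) * ((1 - fps_X) * (1 - fps_X ^ 2) ^ (k + 1))"
    by (simp only: power2_eq_square mult.assoc)
  also have "\<dots> = fps_X ^ 2 * (?T * (1 - fps_X) * (1 - fps_X ^ 2) ^ (k + 1))"
    by (simp only: A_eq mult.assoc)
  also have "\<dots> = fps_X ^ 2 * fps_X ^ (k + 2)"
    by (simp only: C12_gf_two_trapped)
  also have "\<dots> = fps_X ^ (k + 4)"
    by (simp only: power_add[symmetric] add.commute[of 2] add.assoc numeral_plus_numeral semiring_norm)
  finally show ?thesis .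
qed

theorem theorem2p2:
  fixes k :: nat
  assumes "k \<ge> 1"
  shows "Abs_fps (\<lambda>n. of_nat (w n k) :: rat) =
         fps_X ^ (k + 4) / ((1 - fps_X) ^ 2 * (1 - fps_X ^ 2) ^ (k + 1))"
proof -
  let ?D = "(1 - fps_X) ^ 2 * (1 - fps_X ^ 2) ^ (k + 1) :: rat fps"
  have "W n k = {cs \<in> C12 n. trapped_ones False cs = k}" for n
    unfolding W_def C12_def by (auto simp: water_cells_eq_trapped_ones)
  then have gf: "Abs_fps (\<lambda>n. of_nat (w n k)) = C12_gf (\<lambda>cs. trapped_ones False cs = k)"
    by (simp add: w_def C12_gf_def)
  have "fps_nth ?D 0 = 1"
    by (simp add: fps_nth_power_0)
  then have "?D \<noteq> 0"
    by (metis fps_zero_nth zero_neq_one)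
  then show ?thesis
    unfolding gf C12_gf_trapped_False[OF assms, symmetric] by (rule nonzero_mult_div_cancel_right[symmetric])
qed

end
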